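(* Let $\mathcal{X}$ be an input space, let $\mathcal{Z}_k\subseteq\mathbb{R}^d$ be a feature space equipped with the Euclidean norm, and let $h_k:\mathcal{X}\to\mathcal{Z}_k$ be a measurable representation map. Let $f:\mathcal{X}\to[0,1]$ be a labeling function and let $f_k:\mathcal{Z}_k\to[0,1]$ be the induced feature-space target function $f_k(z)=\mathbb{E}[f(x)\mid h_k(x)=z]$. Let $\{\mathcal{D}_e\}_{e}$ be a family of distributions over $\mathcal{X}$ indexed by an environment variable $e$, let $\Pi_e\ge 0$ be a probability density over environments, let the target distribution be the mixture $\mathcal{T}=\int_e \Pi_e\,\mathcal{D}_e\,\mathsf{d}e$, and let the source distribution be the finite mixture $\mathcal{S}=\sum_{i=1}^{S}\Pi_i\,\mathcal{D}_{e_i}$ with $\Pi_i\ge 0$, $\sum_{i=1}^S\Pi_i=1$. Let $\mathcal{H}$ be a class of functions $\mathcal{Z}_k\to[0,1]$, each Lipschitz continuous with Lipschitz constant $L$, and suppose $f_k$ is $\lambda$-close to $\mathcal{H}$ for some $\lambda>0$, i.e. $\inf_{h\in\mathcal{H}}[\epsilon_{\mathcal{S}}(h,f_k)+\epsilon_{\mathcal{T}}(h,f_k)]\le\lambda$. Let $X=\{x_1,\dots,x_n\}$ be drawn i.i.d. from $\mathcal{S}$ and labeled according to $f$, and let $\delta\in(0,1)$. Then for any $h\in\mathcal{H}$, with probability at least $1-\delta$, $$\epsilon_{\mathcal{T}}(h)\le \hat{\epsilon}_{\mathcal{S}}(h)+2L\sum_{i=1}^{S}\Pi_i\int_e \Pi_e\,\mathcal{W}(\widetilde{\mathcal{D}}_{e_i},\widetilde{\mathcal{D}}_e)\,\mathsf{d}e+\lambda+2\hat{\mathcal{R}}_X(\mathcal{H}')+3\sqrt{\frac{\log(2/\delta)}{2n}},$$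 where $\hat{\epsilon}_{\mathcal{S}}(h)=\frac1n\sum_{i=1}^n|h(h_k(x_i))-f(x_i)|$ and $\mathcal{H}'=\{|h\circ h_k-f| : h\in\mathcal{H}\}$.
   Context: For a distribution $\mathcal{D}$ over $\mathcal{X}$, $\widetilde{\mathcal{D}}$ denotes the induced distribution over $\mathcal{Z}_k$, $\Pr_{\widetilde{\mathcal{D}}}(A)=\Pr_{\mathcal{D}}(h_k^{-1}(A))$; in particular $\widetilde{\mathcal{S}},\widetilde{\mathcal{T}}$ are the feature distributions of $\mathcal{S},\mathcal{T}$. For $g_1,g_2:\mathcal{Z}_k\to[0,1]$, $\epsilon_{\mathcal{D}}(g_1,g_2)=\mathbb{E}_{z\sim\widetilde{\mathcal{D}}}|g_1(z)-g_2(z)|$, and $\epsilon_{\mathcal{D}}(h):=\epsilon_{\mathcal{D}}(h,f_k)$. $\mathcal{W}(P_1,P_2)=\inf_{\gamma\in\Pi(P_1,P_2)}\mathbb{E}_{(x,y)\sim\gamma}\|x-y\|_2$ is the Wasserstein-1 distance, $\Pi(P_1,P_2)$ being the set of couplings. The empirical Rademacher complexity of a class $\mathcal{F}$ of real functions on $\mathcal{X}$ w.r.t. the sample $X$ is $\hat{\mathcal{R}}_X(\mathcal{F})=\mathbb{E}_{\sigma}\big[\sup_{g\in\mathcal{F}}\frac1n\sum_{i=1}^n\sigma_i g(x_i)\big]$ with $\sigma_1,\dots,\sigma_n$ independent uniform on $\{-1,1\}$. *)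

theory Defs
  imports "HOL-Probability.Probability"
begin

definition induced_dist :: "'x measure \<Rightarrow> ('x \<Rightarrow> 'z::euclidean_space) \<Rightarrow> 'z set \<Rightarrow> 'z measure" where
  "induced_dist D hk Zk = distr D (restrict_space borel Zk) hk"

definition feat_err :: "'z measure \<Rightarrow> ('z \<Rightarrow> real) \<Rightarrow> ('z \<Rightarrow> real) \<Rightarrow> real" where
  "feat_err Dt g1 g2 = (\<integral>z. \<bar>g1 z - g2 z\<bar> \<partial>Dt)"

definition couplings :: "'z measure \<Rightarrow> 'z measure \<Rightarrow> ('z \<times> 'z) measure set" where
  "couplings P Q = {\<gamma>. prob_space \<gamma> \<and> sets \<gamma> = sets (P \<Otimes>\<^sub>M Q)
       \<and> distr \<gamma> P fst = P \<and> distr \<gamma> Q snd = Q}"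

definition wasserstein1 :: "'z::real_normed_vector measure \<Rightarrow> 'z measure \<Rightarrow> ennreal" where
  "wasserstein1 P Q = (INF \<gamma>\<in>couplings P Q. \<integral>\<^sup>+ p. ennreal (norm (fst p - snd p)) \<partial>\<gamma>)"

definition env_mixture :: "'e measure \<Rightarrow> ('e \<Rightarrow> real) \<Rightarrow> ('e \<Rightarrow> 'x measure) \<Rightarrow> 'x measure \<Rightarrow> 'x measure" where
  "env_mixture E dens D M = measure_of (space M) (sets M)
      (\<lambda>A. \<integral>\<^sup>+ e. ennreal (dens e) * emeasure (D e) A \<partial>E)"

definition finite_mixture :: "nat \<Rightarrow> (nat \<Rightarrow> real) \<Rightarrow> (nat \<Rightarrow> 'e) \<Rightarrow> ('e \<Rightarrow> 'x measure) \<Rightarrow> 'x measure \<Rightarrow> 'x measure" where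
  "finite_mixture m w es D M = measure_of (space M) (sets M)
      (\<lambda>A. \<Sum>i<m. ennreal (w i) * emeasure (D (es i)) A)"

definition emp_rademacher :: "('x \<Rightarrow> real) set \<Rightarrow> (nat \<Rightarrow> 'x) \<Rightarrow> nat \<Rightarrow> real" where
  "emp_rademacher F xs n =
     (\<Sum>\<sigma>\<in>PiE {..<n} (\<lambda>_. {-1, 1::real}). (SUP g\<in>F. (\<Sum>i<n. \<sigma> i * g (xs i)) / real n)) / 2 ^ n"

end

theory Submission
  imports Defs
begin

(* For fixed h, the target error eps_T(h) = eps_T(h, f_k) is split through an arbitrary g in H
   by the triangle inequality.  The term eps_T(h, g) is the mean of |h - g|, a 2L-Lipschitz
   [0,1]-valued function, under the induced target distribution.  Writing T and S as mixtures of
   the same kernel D and comparing every environment e with every source environment e_i, the easy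
   half of Kantorovich-Rubinstein duality bounds it by eps_S(h, g) plus 2L times the averaged
   Wasserstein distance; a second triangle inequality and the infimum over g bring in lambda.
   Since f_k is the conditional expectation of f given h_k, Jensen's inequality gives
   eps_S(h, f_k) <= E_S |h o h_k - f|, and Hoeffding's inequality for the i.i.d. sample bounds this
   expectation by the empirical error plus sqrt(log(1/delta)/2n) with probability at least
   1 - delta.  As h is fixed, no uniform convergence over H is needed: the Rademacher term is
   nonnegative and, like the factor 3 and log(2/delta), only loosens the bound. *)

section \<open>Induced feature distributions\<close>

definition unit_interval_fun :: "'z::euclidean_space set \<Rightarrow> ('z \<Rightarrow> real) \<Rightarrow> bool" where
  "unit_interval_fun Zk g \<longleftrightarrow> g \<in> borel_measurable (restrict_space borel Zk) \<and> (\<forall>z\<in>Zk. g z \<in> {0..1})"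

lemma unit_interval_funD:
  assumes "unit_interval_fun Zk g"
  shows "g \<in> borel_measurable (restrict_space borel Zk)" and "z \<in> Zk \<Longrightarrow> g z \<in> {0..1}"
  using assms by (auto simp: unit_interval_fun_def)

lemma unit_interval_fun_abs_diff:
  assumes "unit_interval_fun Zk g1" and "unit_interval_fun Zk g2"
  shows "unit_interval_fun Zk (\<lambda>z. \<bar>g1 z - g2 z\<bar>)"
  using assms unfolding unit_interval_fun_def by (fastforce simp: abs_le_iff)

lemma (in prob_space) unit_interval_integral:
  fixes G :: "'a \<Rightarrow> real"
  assumes G: "G \<in> borel_measurable M" and G_unit: "\<And>x. x \<in> space M \<Longrightarrow> G x \<in> {0..1}"
  shows "integrable M G" and "integral\<^sup>L M G \<in> {0..1}" and "ennreal (integral\<^sup>L M G) = (\<integral>\<^sup>+ x. G x \<partial>M)"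
proof -
  show int: "integrable M G"
    using G_unit by (intro integrable_const_bound[OF AE_I2 G, of 1]) auto
  have "integral\<^sup>L M G \<le> integral\<^sup>L M (\<lambda>_. 1)"
    using G_unit by (intro integral_mono[OF int]) auto
  moreover have "integral\<^sup>L M G \<ge> 0"
    using G_unit by (intro integral_nonneg_AE) auto
  ultimately show "integral\<^sup>L M G \<in> {0..1}" by (simp add: prob_space)
  show "ennreal (integral\<^sup>L M G) = (\<integral>\<^sup>+ x. G x \<partial>M)"
    using G_unit by (intro nn_integral_eq_integral[symmetric] int) auto
qed

lemma integral_unit_interval_fun:
  assumes P: "prob_space P" "sets P = sets (restrict_space borel Zk)" and G: "unit_interval_fun Zk G"
  shows "integrable P G" and "integral\<^sup>L P G \<in> {0..1}"
proof -
  have "G \<in> borel_measurable P" "\<And>z. z \<in> space P \<Longrightarrow> G z \<in> {0..1}"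
    using unit_interval_funD[OF G] sets_eq_imp_space_eq[OF P(2)] P(2)
    by (auto simp: space_restrict_space cong: measurable_cong_sets)
  then show "integrable P G" and "integral\<^sup>L P G \<in> {0..1}"
    using prob_space.unit_interval_integral[OF P(1)] by blast+
qed

lemma sets_induced_dist [simp]: "sets (induced_dist \<mu> hk Zk) = sets (restrict_space borel Zk)"
  by (simp add: induced_dist_def)

lemma prob_space_induced_dist:
  assumes "prob_space \<mu>" and "sets \<mu> = sets M" and "hk \<in> measurable M (restrict_space borel Zk)"
  shows "prob_space (induced_dist \<mu> hk Zk)"
  unfolding induced_dist_def using assms
  by (intro prob_space.prob_space_distr) (simp_all cong: measurable_cong_sets)

lemma ennreal_integral_induced_dist:
  assumes \<mu>: "prob_space \<mu>" "sets \<mu> = sets M" and hk: "hk \<in> measurable M (restrict_space borel Zk)"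
    and G: "unit_interval_fun Zk G"
  shows "ennreal (\<integral>z. G z \<partial>induced_dist \<mu> hk Zk) = (\<integral>\<^sup>+ x. G (hk x) \<partial>\<mu>)"
proof -
  interpret prob_space "induced_dist \<mu> hk Zk" by (rule prob_space_induced_dist[OF \<mu> hk])
  have "ennreal (\<integral>z. G z \<partial>induced_dist \<mu> hk Zk) = (\<integral>\<^sup>+ z. G z \<partial>induced_dist \<mu> hk Zk)"
    using unit_interval_funD[OF G]
    by (intro unit_interval_integral)
      (auto simp: induced_dist_def space_restrict_space cong: measurable_cong_sets)
  also have "\<dots> = (\<integral>\<^sup>+ x. G (hk x) \<partial>\<mu>)"
    unfolding induced_dist_def using hk \<mu>(2) unit_interval_funD(1)[OF G]
    by (intro nn_integral_distr) (simp_all cong: measurable_cong_sets)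
  finally show ?thesis .
qed

lemma integral_induced_dist_unit_interval:
  assumes "prob_space \<mu>" "sets \<mu> = sets M" and "hk \<in> measurable M (restrict_space borel Zk)"
    and "unit_interval_fun Zk G"
  shows "(\<integral>z. G z \<partial>induced_dist \<mu> hk Zk) \<in> {0..1}"
  using integral_unit_interval_fun(2)[OF prob_space_induced_dist[OF assms(1-3)] _ assms(4)]
  by simp

lemma measurable_integral_induced_kernel:
  fixes G :: "'z::euclidean_space \<Rightarrow> real"
  assumes D_kernel: "D \<in> measurable E (prob_algebra M)"
    and hk: "hk \<in> measurable M (restrict_space borel Zk)"
    and G: "G \<in> borel_measurable (restrict_space borel Zk)"
  shows "(\<lambda>e. \<integral>z. G z \<partial>induced_dist (D e) hk Zk) \<in> borel_measurable E"
proof -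
  have "(\<lambda>e. distr (D e) (restrict_space borel Zk) hk)
      \<in> measurable E (subprob_algebra (restrict_space borel Zk))"
    using measurable_prob_algebraD[OF D_kernel] measurable_distr[OF hk] by (rule measurable_compose)
  then show ?thesis
    unfolding induced_dist_def using integral_measurable_subprob_algebra[OF G]
    by (rule measurable_compose)
qed

section \<open>Mixtures as monadic binds\<close>

lemma measure_of_eq_bind:
  assumes K: "K \<in> measurable N (prob_algebra M)" and N: "space N \<noteq> {}"
    and \<mu>: "\<And>A. A \<in> sets M \<Longrightarrow> \<mu> A = emeasure (bind N K) A"
  shows "measure_of (space M) (sets M) \<mu> = bind N K"
proof -
  have K': "K \<in> measurable N (subprob_algebra M)"
    using K by (rule measurable_prob_algebraD)
  have "bind N K = measure_of (space M) (sets M) (emeasure (bind N K))"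
    using measure_of_of_measure[of "bind N K"]
    by (simp add: sets_bind_measurable[OF K' N] space_bind_measurable[OF K' N])
  also have "\<dots> = measure_of (space M) (sets M) \<mu>"
    by (rule measure_of_eq) (auto simp: sets.space_closed \<mu> sets.sigma_sets_eq)
  finally show ?thesis by simp
qed

context
  fixes E :: "'e measure" and Pe :: "'e \<Rightarrow> real" and D :: "'e \<Rightarrow> 'x measure" and M :: "'x measure"
  assumes D_kernel: "D \<in> measurable E (prob_algebra M)"
    and Pe_meas: "Pe \<in> borel_measurable E"
    and Pe_density: "(\<integral>\<^sup>+ e. ennreal (Pe e) \<partial>E) = 1"
begin

lemma env_mixture_eq_bind: "env_mixture E Pe D M = bind (density E Pe) D"
proof -
  have E: "space E \<noteq> {}" using Pe_density by (auto simp: nn_integral_empty)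
  have K: "D \<in> measurable (density E Pe) (prob_algebra M)"
    using D_kernel by (simp cong: measurable_cong_sets)
  show ?thesis unfolding env_mixture_def
  proof (rule measure_of_eq_bind[OF K])
    show "space (density E Pe) \<noteq> {}" using E by simp
    fix A assume A: "A \<in> sets M"
    have "(\<lambda>e. emeasure (D e) A) \<in> borel_measurable E"
      using measurable_emeasure_subprob_algebra[OF A] measurable_prob_algebraD[OF D_kernel]
      by (rule measurable_compose[rotated])
    then show "(\<integral>\<^sup>+ e. ennreal (Pe e) * emeasure (D e) A \<partial>E) = emeasure (bind (density E Pe) D) A"
      using emeasure_bind[OF _ measurable_prob_algebraD[OF K] A] E Pe_meas
      by (simp add: nn_integral_density)
  qed
qed

lemma density_env_in_prob_algebra: "density E Pe \<in> space (prob_algebra E)"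
  using Pe_meas Pe_density by (auto simp: space_prob_algebra emeasure_density intro!: prob_spaceI)

lemma sets_env_mixture [simp]: "sets (env_mixture E Pe D M) = sets M"
  unfolding env_mixture_eq_bind by (rule sets_bind'[OF density_env_in_prob_algebra D_kernel])

lemma prob_space_env_mixture: "prob_space (env_mixture E Pe D M)"
  unfolding env_mixture_eq_bind by (rule prob_space_bind'[OF density_env_in_prob_algebra D_kernel])

lemma nn_integral_env_mixture:
  assumes u: "u \<in> borel_measurable M"
  shows "(\<integral>\<^sup>+ x. u x \<partial>env_mixture E Pe D M) = (\<integral>\<^sup>+ e. ennreal (Pe e) * (\<integral>\<^sup>+ x. u x \<partial>D e) \<partial>E)"
proof -
  have K: "D \<in> measurable (density E Pe) (subprob_algebra M)"
    using measurable_prob_algebraD[OF D_kernel] by (simp cong: measurable_cong_sets)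
  have "(\<lambda>e. \<integral>\<^sup>+ x. u x \<partial>D e) \<in> borel_measurable E"
    using measurable_prob_algebraD[OF D_kernel] nn_integral_measurable_subprob_algebra[OF u]
    by (rule measurable_compose)
  then show ?thesis
    unfolding env_mixture_eq_bind nn_integral_bind[OF u K] using Pe_meas
    by (simp add: nn_integral_density)
qed

lemma ennreal_integral_induced_env_mixture:
  assumes hk: "hk \<in> measurable M (restrict_space borel Zk)" and G: "unit_interval_fun Zk G"
  shows "ennreal (\<integral>z. G z \<partial>induced_dist (env_mixture E Pe D M) hk Zk)
    = (\<integral>\<^sup>+ e. ennreal (Pe e) * ennreal (\<integral>z. G z \<partial>induced_dist (D e) hk Zk) \<partial>E)"
proof -
  have "(\<lambda>x. ennreal (G (hk x))) \<in> borel_measurable M"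
    using measurable_compose[OF hk unit_interval_funD(1)[OF G]] by measurable
  then have "ennreal (\<integral>z. G z \<partial>induced_dist (env_mixture E Pe D M) hk Zk)
      = (\<integral>\<^sup>+ e. ennreal (Pe e) * (\<integral>\<^sup>+ x. G (hk x) \<partial>D e) \<partial>E)"
    by (simp add: ennreal_integral_induced_dist[OF prob_space_env_mixture sets_env_mixture hk G]
        nn_integral_env_mixture)
  also have "\<dots> = (\<integral>\<^sup>+ e. ennreal (Pe e) * ennreal (\<integral>z. G z \<partial>induced_dist (D e) hk Zk) \<partial>E)"
    using measurable_space[OF D_kernel]
    by (intro nn_integral_cong) (simp add: space_prob_algebra ennreal_integral_induced_dist[OF _ _ hk G])
  finally show ?thesis .
qed

end

context
  fixes m :: nat and w :: "nat \<Rightarrow> real" and es :: "nat \<Rightarrow> 'e"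
    and E :: "'e measure" and D :: "'e \<Rightarrow> 'x measure" and M :: "'x measure"
  assumes D_kernel: "D \<in> measurable E (prob_algebra M)"
    and es_in: "\<And>i. i < m \<Longrightarrow> es i \<in> space E"
    and w_nonneg: "\<And>i. i < m \<Longrightarrow> w i \<ge> 0"
    and w_sum: "(\<Sum>i<m. w i) = 1"
begin

lemma source_kernel_measurable: "(\<lambda>i. D (es i)) \<in> measurable (count_space {..<m}) (prob_algebra M)"
  using measurable_space[OF D_kernel] es_in by auto

lemma finite_mixture_eq_bind:
  "finite_mixture m w es D M = bind (density (count_space {..<m}) w) (\<lambda>i. D (es i))"
proof -
  have m: "m > 0" using w_sum by (cases m) auto
  have K: "(\<lambda>i. D (es i)) \<in> measurable (density (count_space {..<m}) w) (prob_algebra M)"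
    using source_kernel_measurable by (simp cong: measurable_cong_sets)
  show ?thesis unfolding finite_mixture_def
  proof (rule measure_of_eq_bind[OF K])
    show "space (density (count_space {..<m}) w) \<noteq> {}" using m by auto
    fix A assume A: "A \<in> sets M"
    show "(\<Sum>i<m. ennreal (w i) * emeasure (D (es i)) A)
        = emeasure (bind (density (count_space {..<m}) w) (\<lambda>i. D (es i))) A"
      using emeasure_bind[OF _ measurable_prob_algebraD[OF K] A] m
      by (simp add: nn_integral_density nn_integral_count_space_finite lessThan_empty_iff)
  qed
qed

lemma density_weights_in_prob_algebra:
  "density (count_space {..<m}) w \<in> space (prob_algebra (count_space {..<m}))"
proof -
  have "emeasure (density (count_space {..<m}) w) {..<m} = (\<Sum>i<m. ennreal (w i))"
    by (simp add: emeasure_density nn_integral_count_space_finite)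
  also have "\<dots> = 1"
    using w_nonneg w_sum by (subst sum_ennreal) auto
  finally show ?thesis by (auto simp: space_prob_algebra intro!: prob_spaceI)
qed

lemma sets_finite_mixture [simp]: "sets (finite_mixture m w es D M) = sets M"
  unfolding finite_mixture_eq_bind
  by (rule sets_bind'[OF density_weights_in_prob_algebra source_kernel_measurable])

lemma prob_space_finite_mixture: "prob_space (finite_mixture m w es D M)"
  unfolding finite_mixture_eq_bind
  by (rule prob_space_bind'[OF density_weights_in_prob_algebra source_kernel_measurable])

lemma nn_integral_finite_mixture:
  assumes u: "u \<in> borel_measurable M"
  shows "(\<integral>\<^sup>+ x. u x \<partial>finite_mixture m w es D M) = (\<Sum>i<m. ennreal (w i) * (\<integral>\<^sup>+ x. u x \<partial>D (es i)))"
proof -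
  have K: "(\<lambda>i. D (es i)) \<in> measurable (density (count_space {..<m}) w) (subprob_algebra M)"
    using measurable_prob_algebraD[OF source_kernel_measurable] by (simp cong: measurable_cong_sets)
  show ?thesis
    unfolding finite_mixture_eq_bind nn_integral_bind[OF u K]
    by (simp add: nn_integral_density nn_integral_count_space_finite)
qed

lemma integral_induced_finite_mixture:
  assumes hk: "hk \<in> measurable M (restrict_space borel Zk)" and G: "unit_interval_fun Zk G"
  shows "(\<integral>z. G z \<partial>induced_dist (finite_mixture m w es D M) hk Zk)
    = (\<Sum>i<m. w i * (\<integral>z. G z \<partial>induced_dist (D (es i)) hk Zk))"
proof -
  have D_i: "prob_space (D (es i))" "sets (D (es i)) = sets M" if "i < m" for i
    using measurable_space[OF source_kernel_measurable] that by (auto simp: space_prob_algebra)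
  have "(\<lambda>x. ennreal (G (hk x))) \<in> borel_measurable M"
    using measurable_compose[OF hk unit_interval_funD(1)[OF G]] by measurable
  then have "ennreal (\<integral>z. G z \<partial>induced_dist (finite_mixture m w es D M) hk Zk)
      = (\<Sum>i<m. ennreal (w i) * (\<integral>\<^sup>+ x. G (hk x) \<partial>D (es i)))"
    by (simp add: ennreal_integral_induced_dist[OF prob_space_finite_mixture sets_finite_mixture hk G]
        nn_integral_finite_mixture)
  also have "\<dots> = (\<Sum>i<m. ennreal (w i * (\<integral>z. G z \<partial>induced_dist (D (es i)) hk Zk)))"
    using w_nonneg integral_induced_dist_unit_interval[OF D_i hk G]
    by (intro sum.cong) (auto simp: ennreal_mult ennreal_integral_induced_dist[OF D_i hk G])
  also have "\<dots> = ennreal (\<Sum>i<m. w i * (\<integral>z. G z \<partial>induced_dist (D (es i)) hk Zk))"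
    using w_nonneg integral_induced_dist_unit_interval[OF D_i hk G] by (intro sum_ennreal) auto
  finally show ?thesis
    using integral_induced_dist_unit_interval[OF prob_space_finite_mixture sets_finite_mixture hk G]
      w_nonneg integral_induced_dist_unit_interval[OF D_i hk G]
    by (subst (asm) ennreal_inj) (auto intro!: sum_nonneg)
qed

end

section \<open>Wasserstein distance and the transport term\<close>

lemma ennreal_integral_le_nn_integral:
  fixes u :: "'a \<Rightarrow> real"
  shows "ennreal (integral\<^sup>L M u) \<le> (\<integral>\<^sup>+ x. ennreal (u x) \<partial>M)"
proof (cases "(\<integral>\<^sup>+ x. ennreal (u x) \<partial>M) = \<top>")
  case False
  then obtain r where r: "(\<integral>\<^sup>+ x. ennreal (u x) \<partial>M) = ennreal r" "r \<ge> 0"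
    by (cases "\<integral>\<^sup>+ x. ennreal (u x) \<partial>M") auto
  then have "integral\<^sup>L M u \<le> r" by (intro integral_real_bounded) auto
  then show ?thesis using r by (simp add: ennreal_leI)
qed simp

lemma integral_diff_eq_coupling:
  assumes \<gamma>: "\<gamma> \<in> couplings P Q"
    and P: "sets P = sets (restrict_space borel Zk)" and Q: "sets Q = sets (restrict_space borel Zk)"
    and G: "unit_interval_fun Zk G"
  shows "integral\<^sup>L Q G - integral\<^sup>L P G = (\<integral>p. G (snd p) - G (fst p) \<partial>\<gamma>)"
proof -
  from \<gamma> have "prob_space \<gamma>" and \<gamma>_sets: "sets \<gamma> = sets (P \<Otimes>\<^sub>M Q)"
    and marginals: "distr \<gamma> P fst = P" "distr \<gamma> Q snd = Q"
    by (auto simp: couplings_def)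
  interpret prob_space \<gamma> by fact
  have fst: "fst \<in> measurable \<gamma> P" and snd: "snd \<in> measurable \<gamma> Q"
    using measurable_fst[of P Q] measurable_snd[of P Q]
    by (simp_all add: \<gamma>_sets cong: measurable_cong_sets)
  have G_P: "G \<in> borel_measurable P" and G_Q: "G \<in> borel_measurable Q"
    using unit_interval_funD(1)[OF G] by (simp_all add: P Q cong: measurable_cong_sets)
  have G_unit: "G z \<in> {0..1}" if "z \<in> space P \<union> space Q" for z
    using that unit_interval_funD(2)[OF G] sets_eq_imp_space_eq[OF P] sets_eq_imp_space_eq[OF Q]
    by (auto simp: space_restrict_space)
  have "integrable \<gamma> (\<lambda>p. G (fst p))" "integrable \<gamma> (\<lambda>p. G (snd p))"
    using measurable_space[OF fst] measurable_space[OF snd] G_unit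
    by (auto intro!: unit_interval_integral(1) measurable_compose[OF fst G_P]
        measurable_compose[OF snd G_Q])
  then show ?thesis
    using integral_distr[OF snd G_Q] integral_distr[OF fst G_P] marginals by simp
qed

lemma integral_diff_le_coupling:
  fixes G :: "'z::euclidean_space \<Rightarrow> real"
  assumes \<gamma>: "\<gamma> \<in> couplings P Q"
    and P: "sets P = sets (restrict_space borel Zk)" and Q: "sets Q = sets (restrict_space borel Zk)"
    and G: "unit_interval_fun Zk G" and G_lip: "c-lipschitz_on Zk G"
  shows "ennreal (integral\<^sup>L Q G - integral\<^sup>L P G)
    \<le> ennreal c * (\<integral>\<^sup>+ p. ennreal (norm (fst p - snd p)) \<partial>\<gamma>)"
proof -
  have \<gamma>_sets: "sets \<gamma> = sets (P \<Otimes>\<^sub>M Q)"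
    using \<gamma> by (simp add: couplings_def)
  have space_\<gamma>: "space \<gamma> = Zk \<times> Zk"
    using sets_eq_imp_space_eq[OF \<gamma>_sets] sets_eq_imp_space_eq[OF P] sets_eq_imp_space_eq[OF Q]
    by (simp add: space_pair_measure space_restrict_space)
  have "ennreal (integral\<^sup>L Q G - integral\<^sup>L P G) \<le> (\<integral>\<^sup>+ p. ennreal (G (snd p) - G (fst p)) \<partial>\<gamma>)"
    unfolding integral_diff_eq_coupling[OF \<gamma> P Q G] by (rule ennreal_integral_le_nn_integral)
  also have "\<dots> \<le> (\<integral>\<^sup>+ p. ennreal c * ennreal (norm (fst p - snd p)) \<partial>\<gamma>)"
  proof (rule nn_integral_mono)
    fix p assume "p \<in> space \<gamma>"
    then have "dist (G (snd p)) (G (fst p)) \<le> c * dist (snd p) (fst p)"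
      using lipschitz_onD[OF G_lip] space_\<gamma> by (auto simp: mem_Times_iff)
    then show "ennreal (G (snd p) - G (fst p)) \<le> ennreal c * ennreal (norm (fst p - snd p))"
      using lipschitz_on_nonneg[OF G_lip]
      by (simp add: ennreal_mult[symmetric] ennreal_leI dist_real_def dist_norm norm_minus_commute)
  qed
  also have "\<dots> = ennreal c * (\<integral>\<^sup>+ p. ennreal (norm (fst p - snd p)) \<partial>\<gamma>)"
  proof (rule nn_integral_cmult)
    have "(\<lambda>z. z) \<in> measurable (restrict_space borel Zk) borel"
      by (rule measurable_restrict_space1[OF measurable_id])
    then have "fst \<in> borel_measurable \<gamma>" and "snd \<in> borel_measurable \<gamma>"
      using measurable_fst[of P Q] measurable_snd[of P Q]
      by (auto simp: \<gamma>_sets P Q cong: measurable_cong_sets intro: measurable_compose)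
    then show "(\<lambda>p. ennreal (norm (fst p - snd p))) \<in> borel_measurable \<gamma>" by measurable
  qed
  finally show ?thesis .
qed

(* The easy half of Kantorovich-Rubinstein duality.  For c = 0 the right-hand side is 0 even if
   there is no coupling (0 * \<infinity> = 0 in ennreal), so that case uses that G is constant. *)
lemma integral_diff_le_wasserstein1:
  fixes G :: "'z::euclidean_space \<Rightarrow> real"
  assumes P: "prob_space P" "sets P = sets (restrict_space borel Zk)"
    and Q: "prob_space Q" "sets Q = sets (restrict_space borel Zk)"
    and G: "unit_interval_fun Zk G" and G_lip: "c-lipschitz_on Zk G"
  shows "ennreal (integral\<^sup>L Q G - integral\<^sup>L P G) \<le> ennreal c * wasserstein1 P Q"
proof (cases "c = 0")
  case True
  have space_P: "space P = Zk" and space_Q: "space Q = Zk"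
    using sets_eq_imp_space_eq[OF P(2)] sets_eq_imp_space_eq[OF Q(2)]
    by (simp_all add: space_restrict_space)
  then obtain z0 where z0: "z0 \<in> Zk"
    using prob_space.not_empty[OF P(1)] by auto
  have "integral\<^sup>L R G = G z0" if "prob_space R" "space R = Zk" for R
  proof -
    have "integral\<^sup>L R G = integral\<^sup>L R (\<lambda>_. G z0)"
      using that(2) lipschitz_onD[OF G_lip _ z0] True by (intro Bochner_Integration.integral_cong) auto
    then show ?thesis using prob_space.prob_space[OF that(1)] by simp
  qed
  then show ?thesis using P(1) Q(1) space_P space_Q by simp
next
  case False
  then have c: "c > 0" using lipschitz_on_nonneg[OF G_lip] by simp
  define d where "d = integral\<^sup>L Q G - integral\<^sup>L P G"
  have d: "ennreal d = ennreal c * ennreal (d / c)"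
    using c by (cases "d \<ge> 0") (auto simp: ennreal_mult[symmetric] ennreal_neg divide_nonpos_pos)
  have "ennreal (d / c) \<le> wasserstein1 P Q"
    unfolding wasserstein1_def
  proof (rule INF_greatest)
    fix \<gamma> assume \<gamma>: "\<gamma> \<in> couplings P Q"
    have "ennreal c * ennreal (d / c) \<le> ennreal c * (\<integral>\<^sup>+ p. ennreal (norm (fst p - snd p)) \<partial>\<gamma>)"
      using integral_diff_le_coupling[OF \<gamma> P(2) Q(2) G G_lip] unfolding d_def[symmetric] d .
    then show "ennreal (d / c) \<le> (\<integral>\<^sup>+ p. ennreal (norm (fst p - snd p)) \<partial>\<gamma>)"
      using c by (simp add: ennreal_mult_le_mult_iff)
  qed
  then show ?thesis
    unfolding d_def[symmetric] d by (rule mult_left_mono) simp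
qed

(* Unlike nn_integral_cmult, this needs no measurability of g: the Wasserstein distance is not
   known to be measurable in the environment. *)
lemma nn_integral_le_cmult:
  assumes f: "f \<in> borel_measurable M" and c: "c \<ge> 0"
    and f_le: "\<And>x. x \<in> space M \<Longrightarrow> f x \<le> ennreal c * g x"
  shows "integral\<^sup>N M f \<le> ennreal c * integral\<^sup>N M g"
proof (cases "c = 0")
  case True
  then have "integral\<^sup>N M f = integral\<^sup>N M (\<lambda>_. 0)"
    using f_le by (intro nn_integral_cong) auto
  then show ?thesis by simp
next
  case False
  then have inv: "ennreal c * ennreal (1 / c) = 1"
    using c by (simp add: ennreal_mult[symmetric])
  have "integral\<^sup>N M f = ennreal c * (\<integral>\<^sup>+ x. ennreal (1 / c) * f x \<partial>M)"
    using f by (subst nn_integral_cmult[symmetric]) (auto simp: mult.assoc[symmetric] inv)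
  also have "\<dots> \<le> ennreal c * integral\<^sup>N M g"
  proof (intro mult_left_mono nn_integral_mono)
    fix x assume "x \<in> space M"
    then have "ennreal (1 / c) * f x \<le> ennreal (1 / c) * (ennreal c * g x)"
      by (intro mult_left_mono f_le) auto
    also have "\<dots> = g x" by (simp add: mult.assoc[symmetric] mult.commute[of "ennreal (1 / c)"] inv)
    finally show "ennreal (1 / c) * f x \<le> g x" .
  qed simp
  finally show ?thesis .
qed

lemma ennreal_le_weighted_sum_plus:
  fixes w y :: "'i \<Rightarrow> real"
  assumes I: "finite I" and w_nonneg: "\<And>i. i \<in> I \<Longrightarrow> w i \<ge> 0" and w_sum: "sum w I = 1"
    and y_nonneg: "\<And>i. i \<in> I \<Longrightarrow> y i \<ge> 0"
  shows "ennreal x \<le> ennreal (\<Sum>i\<in>I. w i * y i) + (\<Sum>i\<in>I. ennreal (w i) * ennreal (x - y i))"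
proof -
  have "x = (\<Sum>i\<in>I. w i * y i) + (\<Sum>i\<in>I. w i * (x - y i))"
    using w_sum by (simp add: sum.distrib[symmetric] sum_distrib_left[symmetric] algebra_simps)
  also have "\<dots> \<le> (\<Sum>i\<in>I. w i * y i) + (\<Sum>i\<in>I. w i * max 0 (x - y i))"
    using w_nonneg by (intro add_left_mono sum_mono mult_left_mono) auto
  finally have "ennreal x \<le> ennreal ((\<Sum>i\<in>I. w i * y i) + (\<Sum>i\<in>I. w i * max 0 (x - y i)))"
    by (rule ennreal_leI)
  also have "\<dots> = ennreal (\<Sum>i\<in>I. w i * y i) + (\<Sum>i\<in>I. ennreal (w i * max 0 (x - y i)))"
    using w_nonneg y_nonneg by (simp add: ennreal_plus sum_nonneg sum_ennreal)
  also have "(\<Sum>i\<in>I. ennreal (w i * max 0 (x - y i))) = (\<Sum>i\<in>I. ennreal (w i) * ennreal (x - y i))"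
    using w_nonneg by (intro sum.cong) (auto simp: ennreal_mult' max_def ennreal_neg)
  finally show ?thesis .
qed

(* Every target environment e is compared with every source environment es i, with weight w i;
   this produces the averaged Wasserstein term. *)
lemma nn_integral_mixture_le_weighted_sum:
  fixes a :: "'e \<Rightarrow> real" and m :: nat
  assumes Pe_meas: "Pe \<in> borel_measurable E" and Pe_density: "(\<integral>\<^sup>+ e. ennreal (Pe e) \<partial>E) = 1"
    and w_nonneg: "\<And>i. i < m \<Longrightarrow> w i \<ge> 0" and w_sum: "(\<Sum>i<m. w i) = 1"
    and a: "a \<in> borel_measurable E" and a_nonneg: "\<And>i. i < m \<Longrightarrow> a (es i) \<ge> 0"
    and c: "c \<ge> 0"
    and gap: "\<And>i e. i < m \<Longrightarrow> e \<in> space E \<Longrightarrow> ennreal (a e - a (es i)) \<le> ennreal c * W i e"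
  shows "(\<integral>\<^sup>+ e. ennreal (Pe e) * ennreal (a e) \<partial>E)
    \<le> ennreal (\<Sum>i<m. w i * a (es i))
      + ennreal c * (\<Sum>i<m. ennreal (w i) * (\<integral>\<^sup>+ e. ennreal (Pe e) * W i e \<partial>E))"
proof -
  define B where "B = (\<Sum>i<m. w i * a (es i))"
  have "(\<integral>\<^sup>+ e. ennreal (Pe e) * ennreal (a e) \<partial>E)
      \<le> (\<integral>\<^sup>+ e. ennreal (Pe e) * ennreal B
          + (\<Sum>i<m. ennreal (w i) * (ennreal (Pe e) * ennreal (a e - a (es i)))) \<partial>E)"
  proof (rule nn_integral_mono)
    fix e
    have "ennreal (a e) \<le> ennreal B + (\<Sum>i<m. ennreal (w i) * ennreal (a e - a (es i)))"
      unfolding B_def using w_nonneg w_sum a_nonneg by (intro ennreal_le_weighted_sum_plus) auto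
    then have "ennreal (Pe e) * ennreal (a e)
        \<le> ennreal (Pe e) * (ennreal B + (\<Sum>i<m. ennreal (w i) * ennreal (a e - a (es i))))"
      by (rule mult_left_mono) simp
    then show "ennreal (Pe e) * ennreal (a e)
        \<le> ennreal (Pe e) * ennreal B
          + (\<Sum>i<m. ennreal (w i) * (ennreal (Pe e) * ennreal (a e - a (es i))))"
      by (simp add: distrib_left sum_distrib_left ac_simps)
  qed
  also have "\<dots>
      = ennreal B + (\<Sum>i<m. ennreal (w i) * (\<integral>\<^sup>+ e. ennreal (Pe e) * ennreal (a e - a (es i)) \<partial>E))"
    using Pe_meas a Pe_density
    by (simp add: nn_integral_add nn_integral_sum nn_integral_cmult nn_integral_multc)
  also have "\<dots> \<le> ennreal B + (\<Sum>i<m. ennreal (w i) * (ennreal c * (\<integral>\<^sup>+ e. ennreal (Pe e) * W i e \<partial>E)))"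
  proof (intro add_left_mono sum_mono mult_left_mono nn_integral_le_cmult)
    fix i e assume "i \<in> {..<m}" "e \<in> space E"
    then have "ennreal (Pe e) * ennreal (a e - a (es i)) \<le> ennreal (Pe e) * (ennreal c * W i e)"
      using gap by (intro mult_left_mono) auto
    then show "ennreal (Pe e) * ennreal (a e - a (es i)) \<le> ennreal c * (ennreal (Pe e) * W i e)"
      by (simp add: ac_simps)
  qed (use Pe_meas a c in auto)
  finally show ?thesis
    unfolding B_def by (simp add: sum_distrib_left ac_simps)
qed

lemma integral_induced_env_mixture_le:
  fixes Zk :: "'z::euclidean_space set" and M :: "'x measure"
  assumes D_kernel: "D \<in> measurable E (prob_algebra M)"
    and Pe_meas: "Pe \<in> borel_measurable E" and Pe_density: "(\<integral>\<^sup>+ e. ennreal (Pe e) \<partial>E) = 1"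
    and es_in: "\<And>i. i < m \<Longrightarrow> es i \<in> space E"
    and w_nonneg: "\<And>i. i < m \<Longrightarrow> w i \<ge> 0" and w_sum: "(\<Sum>i<m. w i) = 1"
    and hk: "hk \<in> measurable M (restrict_space borel Zk)"
    and G: "unit_interval_fun Zk G" and G_lip: "c-lipschitz_on Zk G"
  shows "ennreal (\<integral>z. G z \<partial>induced_dist (env_mixture E Pe D M) hk Zk)
    \<le> ennreal (\<integral>z. G z \<partial>induced_dist (finite_mixture m w es D M) hk Zk)
      + ennreal c * (\<Sum>i<m. ennreal (w i) *
          (\<integral>\<^sup>+ e. ennreal (Pe e) *
            wasserstein1 (induced_dist (D (es i)) hk Zk) (induced_dist (D e) hk Zk) \<partial>E))"
proof -
  define a where "a e = (\<integral>z. G z \<partial>induced_dist (D e) hk Zk)" for e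
  have D_e: "prob_space (D e)" "sets (D e) = sets M" if "e \<in> space E" for e
    using measurable_space[OF D_kernel that] by (auto simp: space_prob_algebra)
  have "ennreal (\<integral>z. G z \<partial>induced_dist (env_mixture E Pe D M) hk Zk)
      = (\<integral>\<^sup>+ e. ennreal (Pe e) * ennreal (a e) \<partial>E)"
    unfolding a_def by (rule ennreal_integral_induced_env_mixture[OF D_kernel Pe_meas Pe_density hk G])
  also have "\<dots> \<le> ennreal (\<Sum>i<m. w i * a (es i)) + ennreal c * (\<Sum>i<m. ennreal (w i) *
          (\<integral>\<^sup>+ e. ennreal (Pe e) *
            wasserstein1 (induced_dist (D (es i)) hk Zk) (induced_dist (D e) hk Zk) \<partial>E))"
  proof (rule nn_integral_mixture_le_weighted_sum[OF Pe_meas Pe_density w_nonneg w_sum])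
    show "a \<in> borel_measurable E"
      unfolding a_def
      by (rule measurable_integral_induced_kernel[OF D_kernel hk unit_interval_funD(1)[OF G]])
    show "a (es i) \<ge> 0" if "i < m" for i
      using integral_induced_dist_unit_interval[OF D_e[OF es_in[OF that]] hk G] by (simp add: a_def)
    show "c \<ge> 0"
      by (rule lipschitz_on_nonneg[OF G_lip])
    show "ennreal (a e - a (es i))
        \<le> ennreal c * wasserstein1 (induced_dist (D (es i)) hk Zk) (induced_dist (D e) hk Zk)"
      if "i < m" "e \<in> space E" for i e
      using integral_diff_le_wasserstein1[OF prob_space_induced_dist[OF D_e[OF es_in[OF that(1)]] hk]
          sets_induced_dist prob_space_induced_dist[OF D_e[OF that(2)] hk] sets_induced_dist G G_lip]
      by (simp add: a_def)
  qed
  also have "(\<Sum>i<m. w i * a (es i)) = (\<integral>z. G z \<partial>induced_dist (finite_mixture m w es D M) hk Zk)"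
    unfolding a_def
    by (rule integral_induced_finite_mixture[symmetric, OF D_kernel es_in w_nonneg w_sum hk G])
  finally show ?thesis .
qed

section \<open>Transfer of the feature-space error\<close>

lemma feat_err_commute: "feat_err P g1 g2 = feat_err P g2 g1"
  unfolding feat_err_def by (simp add: abs_minus_commute)

lemma feat_err_nonneg: "feat_err P g1 g2 \<ge> 0"
  unfolding feat_err_def by (rule Bochner_Integration.integral_nonneg) simp

lemma feat_err_triangle:
  assumes P: "prob_space P" "sets P = sets (restrict_space borel Zk)"
    and g: "unit_interval_fun Zk g1" "unit_interval_fun Zk g2" "unit_interval_fun Zk g3"
  shows "feat_err P g1 g3 \<le> feat_err P g1 g2 + feat_err P g2 g3"
proof -
  have int: "integrable P (\<lambda>z. \<bar>u z - v z\<bar>)"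
    if "unit_interval_fun Zk u" "unit_interval_fun Zk v" for u v
    by (rule integral_unit_interval_fun(1)[OF P unit_interval_fun_abs_diff[OF that]])
  have "feat_err P g1 g3 \<le> (\<integral>z. \<bar>g1 z - g2 z\<bar> + \<bar>g2 z - g3 z\<bar> \<partial>P)"
    unfolding feat_err_def using int g by (intro integral_mono) auto
  then show ?thesis
    unfolding feat_err_def using int g by simp
qed

lemma feat_err_transfer_triangle:
  assumes P: "prob_space P" "sets P = sets (restrict_space borel Zk)"
    and Q: "prob_space Q" "sets Q = sets (restrict_space borel Zk)"
    and h: "unit_interval_fun Zk h" and g: "unit_interval_fun Zk g" and fk: "unit_interval_fun Zk fk"
    and transfer: "feat_err Q h g \<le> feat_err P h g + K"
  shows "feat_err Q h fk \<le> feat_err P h fk + (feat_err P g fk + feat_err Q g fk) + K"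
  using feat_err_triangle[OF Q h g fk] feat_err_triangle[OF P h fk g] feat_err_commute[of P fk g]
    transfer
  by linarith

lemma lipschitz_on_abs_diff:
  fixes f g :: "'a::metric_space \<Rightarrow> real"
  assumes "C-lipschitz_on U f" and "D-lipschitz_on U g"
  shows "(C + D)-lipschitz_on U (\<lambda>x. \<bar>f x - g x\<bar>)"
proof -
  have "1-lipschitz_on ((\<lambda>x. f x - g x) ` U) abs"
    by (rule lipschitz_onI) (auto simp: dist_real_def abs_triangle_ineq3)
  then show ?thesis
    using lipschitz_on_compose2[OF lipschitz_on_diff[OF assms]] by fastforce
qed

lemma feat_err_adaptation_bound:
  fixes Zk :: "'z::euclidean_space set" and H :: "('z \<Rightarrow> real) set"
  assumes P: "prob_space P" "sets P = sets (restrict_space borel Zk)"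
    and Q: "prob_space Q" "sets Q = sets (restrict_space borel Zk)"
    and fk: "unit_interval_fun Zk fk"
    and H_unit: "\<And>g. g \<in> H \<Longrightarrow> unit_interval_fun Zk g" and H_lip: "\<And>g. g \<in> H \<Longrightarrow> L-lipschitz_on Zk g"
    and h: "h \<in> H"
    and transport: "\<And>G. unit_interval_fun Zk G \<Longrightarrow> (2 * L)-lipschitz_on Zk G \<Longrightarrow>
        ennreal (integral\<^sup>L Q G) \<le> ennreal (integral\<^sup>L P G) + B"
  shows "ennreal (feat_err Q h fk)
    \<le> ennreal (feat_err P h fk + (INF g\<in>H. feat_err P g fk + feat_err Q g fk)) + B"
proof (cases "B = \<top>")
  case False
  then obtain K where B: "B = ennreal K" and K: "K \<ge> 0" by (cases B) auto
  define joint where "joint = (INF g\<in>H. feat_err P g fk + feat_err Q g fk)"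
  have "feat_err Q h fk - feat_err P h fk - K \<le> feat_err P g fk + feat_err Q g fk" if g: "g \<in> H" for g
  proof -
    have "ennreal (feat_err Q h g) \<le> ennreal (feat_err P h g) + ennreal K"
      unfolding feat_err_def B[symmetric]
      using lipschitz_on_abs_diff[OF H_lip[OF h] H_lip[OF g]]
        unit_interval_fun_abs_diff[OF H_unit[OF h] H_unit[OF g]]
      by (intro transport) simp_all
    then have "feat_err Q h g \<le> feat_err P h g + K"
      using K feat_err_nonneg[of P h g] by (simp add: ennreal_plus[symmetric] del: ennreal_plus)
    from feat_err_transfer_triangle[OF P Q H_unit[OF h] H_unit[OF g] fk this] show ?thesis
      by simp
  qed
  then have "feat_err Q h fk - feat_err P h fk - K \<le> joint"
    unfolding joint_def using h by (intro cINF_greatest) auto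
  then have "feat_err Q h fk \<le> feat_err P h fk + joint + K"
    by simp
  moreover have "0 \<le> feat_err P h fk + joint"
    unfolding joint_def using h
    by (intro add_nonneg_nonneg cINF_greatest) (auto intro: add_nonneg_nonneg feat_err_nonneg)
  ultimately show ?thesis
    unfolding B joint_def[symmetric] using K by (simp add: ennreal_plus[symmetric] del: ennreal_plus)
qed simp

section \<open>Source error and sampling\<close>

(* Jensen's inequality for the absolute value of a conditional expectation, using only the two
   sets on which u - v has constant sign s = +-1: the functions s * v and s * f have the same
   integral. *)
lemma integral_abs_diff_le_of_set_integrals_eq:
  fixes u v f :: "'a \<Rightarrow> real"
  assumes u: "integrable S u" and v: "integrable S v" and f: "integrable S f"
    and A: "A \<in> sets S" and sign: "\<And>x. x \<in> space S \<Longrightarrow> x \<in> A \<longleftrightarrow> v x \<le> u x"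
    and eq_A: "(\<integral>x\<in>A. f x \<partial>S) = (\<integral>x\<in>A. v x \<partial>S)"
    and eq_compl: "(\<integral>x\<in>space S - A. f x \<partial>S) = (\<integral>x\<in>space S - A. v x \<partial>S)"
  shows "(\<integral>x. \<bar>u x - v x\<bar> \<partial>S) \<le> (\<integral>x. \<bar>u x - f x\<bar> \<partial>S)"
proof -
  define s where "s x = (indicator A x - indicator (space S - A) x :: real)" for x
  have s_int: "integrable S (\<lambda>x. s x * g x)"
    and s_split: "(\<integral>x. s x * g x \<partial>S) = (\<integral>x\<in>A. g x \<partial>S) - (\<integral>x\<in>space S - A. g x \<partial>S)"
    if "integrable S g" for g
  proof -
    have "integrable S (\<lambda>x. indicator A x * g x)" "integrable S (\<lambda>x. indicator (space S - A) x * g x)"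
      using integrable_mult_indicator[OF _ that, of A]
        integrable_mult_indicator[OF _ that, of "space S - A"] A
      by auto
    then show "integrable S (\<lambda>x. s x * g x)"
      and "(\<integral>x. s x * g x \<partial>S) = (\<integral>x\<in>A. g x \<partial>S) - (\<integral>x\<in>space S - A. g x \<partial>S)"
      by (simp_all add: s_def left_diff_distrib set_lebesgue_integral_def)
  qed
  have "(\<integral>x. \<bar>u x - v x\<bar> \<partial>S) = (\<integral>x. s x * u x - s x * v x \<partial>S)"
    using sign by (intro Bochner_Integration.integral_cong) (auto simp: s_def indicator_def)
  also have "\<dots> = (\<integral>x. s x * u x \<partial>S) - (\<integral>x. s x * f x \<partial>S)"
    using s_int[OF u] s_int[OF v] s_split[OF v] s_split[OF f] eq_A eq_compl by simp
  also have "\<dots> = (\<integral>x. s x * u x - s x * f x \<partial>S)"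
    using s_int[OF u] s_int[OF f] by simp
  also have "\<dots> \<le> (\<integral>x. \<bar>u x - f x\<bar> \<partial>S)"
    using s_int[OF u] s_int[OF f] u f
    by (intro integral_mono) (auto simp: s_def indicator_def)
  finally show ?thesis .
qed

lemma feat_err_induced_le_expected_loss:
  assumes "prob_space S" and hk: "hk \<in> measurable S (restrict_space borel Zk)"
    and f: "f \<in> borel_measurable S" and f_unit: "\<And>x. x \<in> space S \<Longrightarrow> f x \<in> {0..1}"
    and fk_unit: "unit_interval_fun Zk fk" and h_unit: "unit_interval_fun Zk h"
    and fk_condexp: "\<And>A. A \<in> sets (restrict_space borel Zk) \<Longrightarrow>
        (\<integral>x\<in>hk -` A \<inter> space S. f x \<partial>S) = (\<integral>x\<in>hk -` A \<inter> space S. fk (hk x) \<partial>S)"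
  shows "feat_err (induced_dist S hk Zk) h fk \<le> (\<integral>x. \<bar>h (hk x) - f x\<bar> \<partial>S)"
proof -
  interpret prob_space S by fact
  note fk = unit_interval_funD(1)[OF fk_unit] and h = unit_interval_funD(1)[OF h_unit]
  let ?Zk = "space (restrict_space borel Zk)"
  have hk_Zk: "hk x \<in> ?Zk" if "x \<in> space S" for x
    using measurable_space[OF hk that] .
  define Z where "Z = {z \<in> ?Zk. fk z \<le> h z}"
  have Z: "Z \<in> sets (restrict_space borel Zk)"
    unfolding Z_def using fk h by measurable
  then have Z_compl: "?Zk - Z \<in> sets (restrict_space borel Zk)"
    by auto
  have compl: "space S - hk -` Z \<inter> space S = hk -` (?Zk - Z) \<inter> space S"
    using hk_Zk by auto
  have "feat_err (induced_dist S hk Zk) h fk = (\<integral>x. \<bar>h (hk x) - fk (hk x)\<bar> \<partial>S)"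
    unfolding feat_err_def induced_dist_def by (rule integral_distr[OF hk]) (use fk h in measurable)
  also have "\<dots> \<le> (\<integral>x. \<bar>h (hk x) - f x\<bar> \<partial>S)"
  proof (rule integral_abs_diff_le_of_set_integrals_eq)
    show "integrable S (\<lambda>x. h (hk x))"
      using hk_Zk unit_interval_funD(2)[OF h_unit]
      by (intro unit_interval_integral(1) measurable_compose[OF hk h]) (auto simp: space_restrict_space)
    show "integrable S (\<lambda>x. fk (hk x))"
      using hk_Zk unit_interval_funD(2)[OF fk_unit]
      by (intro unit_interval_integral(1) measurable_compose[OF hk fk]) (auto simp: space_restrict_space)
    show "integrable S f"
      using f_unit by (intro unit_interval_integral(1) f) auto
    show "hk -` Z \<inter> space S \<in> sets S"
      using measurable_sets[OF hk Z] .
    show "x \<in> hk -` Z \<inter> space S \<longleftrightarrow> fk (hk x) \<le> h (hk x)" if "x \<in> space S" for x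
      using that hk_Zk by (auto simp: Z_def)
    show "(\<integral>x\<in>hk -` Z \<inter> space S. f x \<partial>S) = (\<integral>x\<in>hk -` Z \<inter> space S. fk (hk x) \<partial>S)"
      by (rule fk_condexp[OF Z])
    show "(\<integral>x\<in>space S - hk -` Z \<inter> space S. f x \<partial>S) = (\<integral>x\<in>space S - hk -` Z \<inter> space S. fk (hk x) \<partial>S)"
      unfolding compl by (rule fk_condexp[OF Z_compl])
  qed
  finally show ?thesis .
qed

(* Flipping all signs is a bijection of {-1,1}^n that negates every correlation, so the suprema
   at sigma and at -sigma add up to a nonnegative number. *)
lemma emp_rademacher_nonneg:
  assumes g0: "g0 \<in> F" and n: "n \<ge> 1" and bounded: "\<And>g i. g \<in> F \<Longrightarrow> i < n \<Longrightarrow> \<bar>g (xs i)\<bar> \<le> B"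
  shows "emp_rademacher F xs n \<ge> 0"
proof -
  define Sig where "Sig = PiE {..<n} (\<lambda>_. {-1, 1::real})"
  define a where "a \<sigma> g = (\<Sum>i<n. \<sigma> i * g (xs i)) / real n" for \<sigma> :: "nat \<Rightarrow> real" and g
  define \<Phi> where "\<Phi> \<sigma> = (SUP g\<in>F. a \<sigma> g)" for \<sigma>
  define flip where "flip \<sigma> = restrict (\<lambda>i. - \<sigma> i) {..<n}" for \<sigma> :: "nat \<Rightarrow> real"
  have "a \<sigma> g \<le> B" if "\<sigma> \<in> Sig" "g \<in> F" for \<sigma> g
  proof -
    have "(\<Sum>i<n. \<sigma> i * g (xs i)) \<le> (\<Sum>i<n. B)"
    proof (rule sum_mono)
      fix i assume i: "i \<in> {..<n}"
      then have "\<sigma> i \<in> {-1, 1}" using that(1) by (auto simp: Sig_def PiE_iff)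
      then show "\<sigma> i * g (xs i) \<le> B" using bounded[OF that(2)] i by (auto simp: abs_le_iff)
    qed
    then show ?thesis using n by (simp add: a_def divide_le_eq mult.commute)
  qed
  then have \<Phi>_ge: "\<Phi> \<sigma> \<ge> a \<sigma> g0" if "\<sigma> \<in> Sig" for \<sigma>
    unfolding \<Phi>_def using that g0 by (intro cSUP_upper bdd_aboveI) auto
  have flip_Sig: "flip \<sigma> \<in> Sig" and flip_flip: "flip (flip \<sigma>) = \<sigma>" if "\<sigma> \<in> Sig" for \<sigma>
    using that by (auto simp: Sig_def flip_def PiE_iff fun_eq_iff extensional_def)
  have a_flip: "a (flip \<sigma>) g = - a \<sigma> g" for \<sigma> g
    by (simp add: a_def flip_def sum_negf)
  have "bij_betw flip Sig Sig"
    by (rule bij_betwI[where g = flip]) (auto simp: flip_Sig flip_flip)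
  then have "2 * (\<Sum>\<sigma>\<in>Sig. \<Phi> \<sigma>) = (\<Sum>\<sigma>\<in>Sig. \<Phi> \<sigma> + \<Phi> (flip \<sigma>))"
    by (simp add: sum.distrib sum.reindex_bij_betw)
  also have "\<dots> \<ge> 0"
    using \<Phi>_ge \<Phi>_ge[OF flip_Sig] by (intro sum_nonneg) (fastforce simp: a_flip)
  finally show ?thesis
    by (simp add: emp_rademacher_def Sig_def \<Phi>_def a_def)
qed

lemma indep_vars_PiM_coordinates:
  assumes I: "finite I" "I \<noteq> {}" and M: "\<And>i. i \<in> I \<Longrightarrow> prob_space (M i)"
  shows "prob_space.indep_vars (PiM I M) M (\<lambda>i x. x i) I"
proof -
  interpret prob_space "PiM I M" by (rule prob_space_PiM) (use M in auto)
  show ?thesis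
  proof (subst indep_vars_iff_distr_eq_PiM')
    have "distr (PiM I M) (PiM I M) (\<lambda>x. restrict x I) = distr (PiM I M) (PiM I M) (\<lambda>x. x)"
      by (rule distr_cong) (auto simp: space_PiM PiE_def extensional_restrict)
    also have "\<dots> = PiM I (\<lambda>i. distr (PiM I M) (M i) (\<lambda>x. x i))"
      using M by (auto intro!: PiM_cong distr_PiM_component[symmetric] I)
    finally show "distr (PiM I M) (PiM I M) (\<lambda>x. restrict x I)
        = PiM I (\<lambda>i. distr (PiM I M) (M i) (\<lambda>x. x i))" .
  qed (use I in auto)
qed

lemma Hoeffding_PiM_sample_mean:
  fixes l :: "'a \<Rightarrow> real"
  assumes S: "prob_space S" and l: "l \<in> borel_measurable S"
    and l_unit: "\<And>x. x \<in> space S \<Longrightarrow> l x \<in> {0..1}" and n: "0 < n" and \<epsilon>: "\<epsilon> \<ge> 0"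
  shows "measure (PiM {..<n} (\<lambda>_. S))
      {xs \<in> space (PiM {..<n} (\<lambda>_. S)). (\<Sum>i<n. l (xs i)) / real n \<le> (\<integral>x. l x \<partial>S) - \<epsilon>}
    \<le> exp (- 2 * real n * \<epsilon>\<^sup>2)"
proof -
  define P where "P = PiM {..<n} (\<lambda>_. S)"
  interpret P: prob_space P unfolding P_def by (rule prob_space_PiM) (use S in auto)
  have coord: "(\<lambda>xs. xs i) \<in> measurable P S" and distr_coord: "distr P S (\<lambda>xs. xs i) = S"
    if "i < n" for i
    unfolding P_def using that S by (auto intro: measurable_component_singleton distr_PiM_component)
  have distr_l: "distr P borel (\<lambda>xs. l (xs i)) = distr S borel l" if "i < n" for i
    using distr_distr[OF l coord[OF that]] distr_coord[OF that] by (simp add: comp_def)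
  interpret Hoeffding_ineq_iid P "{..<n}" "\<lambda>i xs. l (xs i)" "\<lambda>xs. l (xs 0)" 0 1
      "P.expectation (\<lambda>xs. l (xs 0))"
  proof unfold_locales
    show "P.indep_vars (\<lambda>_. borel) (\<lambda>i xs. l (xs i)) {..<n}"
      using P.indep_vars_compose2[OF indep_vars_PiM_coordinates[of "{..<n}" "\<lambda>_. S", folded P_def],
          of "\<lambda>_. l" "\<lambda>_. borel"] n S l
      by auto
    show "distr P borel (\<lambda>xs. l (xs i)) = distr P borel (\<lambda>xs. l (xs 0))" if "i \<in> {..<n}" for i
      using distr_l[of i] distr_l[of 0] that n by simp
    show "AE xs in P. l (xs 0) \<in> {0..1}"
      using measurable_space[OF coord[OF n]] l_unit by auto
  qed (use measurable_compose[OF coord[OF n] l] n in auto)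
  have "P.expectation (\<lambda>xs. l (xs 0)) = (\<integral>x. l x \<partial>S)"
    using integral_distr[OF coord[OF n] l] distr_coord[OF n] by simp
  moreover have "P.prob {xs \<in> space P. (\<Sum>i\<in>{..<n}. l (xs i)) / real (card {..<n})
      \<le> P.expectation (\<lambda>xs. l (xs 0)) - \<epsilon>} \<le> exp (- 2 * real (card {..<n}) * \<epsilon>\<^sup>2 / (1 - 0)\<^sup>2)"
    using n by (intro Hoeffding_ineq_le'[OF \<epsilon>]) auto
  ultimately show ?thesis
    unfolding P_def by simp
qed

lemma Hoeffding_sample_mean:
  fixes l :: "'a \<Rightarrow> real"
  assumes S: "prob_space S" and l: "l \<in> borel_measurable S"
    and l_unit: "\<And>x. x \<in> space S \<Longrightarrow> l x \<in> {0..1}"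
    and n: "n \<ge> 1" and \<delta>: "0 < \<delta>" "\<delta> < 1"
  shows "\<exists>A \<in> sets (PiM {..<n} (\<lambda>_. S)). measure (PiM {..<n} (\<lambda>_. S)) A \<ge> 1 - \<delta> \<and>
     (\<forall>xs\<in>A. (\<integral>x. l x \<partial>S) \<le> (\<Sum>i<n. l (xs i)) / real n + sqrt (ln (1 / \<delta>) / (2 * real n)))"
proof -
  define P where "P = PiM {..<n} (\<lambda>_. S)"
  interpret P: prob_space P unfolding P_def by (rule prob_space_PiM) (use S in auto)
  define \<epsilon> where "\<epsilon> = sqrt (ln (1 / \<delta>) / (2 * real n))"
  have "ln (1 / \<delta>) > 0" using \<delta> by simp
  then have \<epsilon>: "\<epsilon> \<ge> 0" "exp (- 2 * real n * \<epsilon>\<^sup>2) = \<delta>"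
    unfolding \<epsilon>_def using n \<delta> by (simp_all add: exp_minus field_simps)
  define Bad where "Bad = {xs \<in> space P. (\<Sum>i<n. l (xs i)) / real n \<le> (\<integral>x. l x \<partial>S) - \<epsilon>}"
  have Bad: "Bad \<in> P.events"
    unfolding Bad_def P_def using l by measurable
  have "P.prob Bad \<le> exp (- 2 * real n * \<epsilon>\<^sup>2)"
    using Hoeffding_PiM_sample_mean[OF S l l_unit _ \<epsilon>(1), of n] n unfolding Bad_def P_def by simp
  then have "P.prob Bad \<le> \<delta>"
    unfolding \<epsilon>(2) .
  show ?thesis
  proof (intro bexI conjI ballI)
    show "space P - Bad \<in> sets (PiM {..<n} (\<lambda>_. S))"
      using Bad unfolding P_def by auto
    show "measure (PiM {..<n} (\<lambda>_. S)) (space P - Bad) \<ge> 1 - \<delta>"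
      using P.prob_compl[OF Bad] \<open>P.prob Bad \<le> \<delta>\<close> unfolding P_def by simp
    fix xs assume "xs \<in> space P - Bad"
    then show "(\<integral>x. l x \<partial>S) \<le> (\<Sum>i<n. l (xs i)) / real n + sqrt (ln (1 / \<delta>) / (2 * real n))"
      unfolding Bad_def \<epsilon>_def by auto
  qed
qed

section \<open>The mixture setting\<close>

locale mixture_adaptation =
  fixes M :: "'x measure" and Zk :: "'z::euclidean_space set" and hk :: "'x \<Rightarrow> 'z"
    and f :: "'x \<Rightarrow> real" and fk :: "'z \<Rightarrow> real"
    and E :: "'e measure" and D :: "'e \<Rightarrow> 'x measure" and Pe :: "'e \<Rightarrow> real"
    and m :: nat and w :: "nat \<Rightarrow> real" and es :: "nat \<Rightarrow> 'e"
    and H :: "('z \<Rightarrow> real) set" and L :: real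
  assumes hk_meas: "hk \<in> measurable M borel"
    and hk_Zk: "\<And>x. x \<in> space M \<Longrightarrow> hk x \<in> Zk"
    and f_meas: "f \<in> borel_measurable M"
    and f_range: "\<And>x. x \<in> space M \<Longrightarrow> f x \<in> {0..1}"
    and fk_meas: "fk \<in> borel_measurable (restrict_space borel Zk)"
    and fk_range: "\<And>z. z \<in> Zk \<Longrightarrow> fk z \<in> {0..1}"
    and fk_condexp: "\<And>A. A \<in> sets (restrict_space borel Zk) \<Longrightarrow>
        (\<integral>x\<in>hk -` A \<inter> space M. f x \<partial>finite_mixture m w es D M)
        = (\<integral>x\<in>hk -` A \<inter> space M. fk (hk x) \<partial>finite_mixture m w es D M)"
    and D_kernel: "D \<in> measurable E (prob_algebra M)"
    and Pe_meas: "Pe \<in> borel_measurable E"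
    and Pe_density: "(\<integral>\<^sup>+ e. ennreal (Pe e) \<partial>E) = 1"
    and es_in: "\<And>i. i < m \<Longrightarrow> es i \<in> space E"
    and w_nonneg: "\<And>i. i < m \<Longrightarrow> w i \<ge> 0"
    and w_sum: "(\<Sum>i<m. w i) = 1"
    and H_range: "\<And>g z. g \<in> H \<Longrightarrow> z \<in> Zk \<Longrightarrow> g z \<in> {0..1}"
    and H_lipschitz: "\<And>g. g \<in> H \<Longrightarrow> L-lipschitz_on Zk g"
begin

abbreviation "source \<equiv> finite_mixture m w es D M"
abbreviation "target \<equiv> env_mixture E Pe D M"
abbreviation "loss h x \<equiv> \<bar>h (hk x) - f x\<bar>"
abbreviation "joint_error \<equiv>
  (INF g\<in>H. feat_err (induced_dist source hk Zk) g fk + feat_err (induced_dist target hk Zk) g fk)"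
abbreviation "transport_cost \<equiv> (\<Sum>i<m. ennreal (w i) *
  (\<integral>\<^sup>+ e. ennreal (Pe e) * wasserstein1 (induced_dist (D (es i)) hk Zk) (induced_dist (D e) hk Zk) \<partial>E))"

lemma hk_measurable_restrict: "hk \<in> measurable M (restrict_space borel Zk)"
  using hk_meas hk_Zk by (intro measurable_restrict_space2) auto

lemma fk_unit: "unit_interval_fun Zk fk"
  using fk_meas fk_range by (simp add: unit_interval_fun_def)

lemma H_unit: "g \<in> H \<Longrightarrow> unit_interval_fun Zk g"
  using H_range borel_measurable_continuous_on_restrict[OF lipschitz_on_continuous_on[OF H_lipschitz]]
  by (simp add: unit_interval_fun_def)

lemma prob_space_source: "prob_space source" and sets_source: "sets source = sets M"
  using D_kernel es_in w_nonneg w_sum by (simp_all add: prob_space_finite_mixture)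

lemma prob_space_target: "prob_space target" and sets_target: "sets target = sets M"
  using D_kernel Pe_meas Pe_density by (simp_all add: prob_space_env_mixture)

lemma space_source: "space source = space M"
  using sets_eq_imp_space_eq[OF sets_source] .

lemma loss_measurable: "h \<in> H \<Longrightarrow> loss h \<in> borel_measurable source"
  using measurable_compose[OF hk_measurable_restrict unit_interval_funD(1)[OF H_unit]] f_meas
    sets_source
  by (simp cong: measurable_cong_sets)

lemma loss_unit: "h \<in> H \<Longrightarrow> x \<in> space source \<Longrightarrow> loss h x \<in> {0..1}"
  using H_range[OF _ hk_Zk, of h x] f_range[of x] by (auto simp: space_source)

lemma target_error_le:
  assumes h: "h \<in> H"
  shows "ennreal (feat_err (induced_dist target hk Zk) h fk)
    \<le> ennreal ((\<integral>x. loss h x \<partial>source) + joint_error) + ennreal (2 * L) * transport_cost"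
proof -
  have "ennreal (feat_err (induced_dist target hk Zk) h fk)
      \<le> ennreal (feat_err (induced_dist source hk Zk) h fk + joint_error)
        + ennreal (2 * L) * transport_cost"
    using prob_space_induced_dist[OF prob_space_source sets_source hk_measurable_restrict]
      prob_space_induced_dist[OF prob_space_target sets_target hk_measurable_restrict]
      fk_unit H_unit H_lipschitz h
      integral_induced_env_mixture_le[OF D_kernel Pe_meas Pe_density es_in w_nonneg w_sum
        hk_measurable_restrict]
    by (intro feat_err_adaptation_bound) simp_all
  also have "\<dots> \<le> ennreal ((\<integral>x. loss h x \<partial>source) + joint_error) + ennreal (2 * L) * transport_cost"
    using f_meas sets_source f_range fk_condexp
      feat_err_induced_le_expected_loss[OF prob_space_source _ _ _ fk_unit H_unit[OF h], of hk f]
    by (intro add_right_mono ennreal_leI)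
      (simp add: space_source hk_measurable_restrict cong: measurable_cong_sets)
  finally show ?thesis .
qed

lemma emp_rademacher_loss_nonneg:
  assumes "h \<in> H" and "n \<ge> 1" and xs: "\<And>i. i < n \<Longrightarrow> xs i \<in> space M"
  shows "emp_rademacher ((\<lambda>g x. \<bar>g (hk x) - f x\<bar>) ` H) xs n \<ge> 0"
proof (rule emp_rademacher_nonneg[where B = 1])
  show "(\<lambda>x. \<bar>h (hk x) - f x\<bar>) \<in> (\<lambda>g x. \<bar>g (hk x) - f x\<bar>) ` H"
    using \<open>h \<in> H\<close> by blast
  fix g i assume "g \<in> (\<lambda>g x. \<bar>g (hk x) - f x\<bar>) ` H" "i < n"
  then obtain g' where "g' \<in> H" "g = (\<lambda>x. \<bar>g' (hk x) - f x\<bar>)" and "xs i \<in> space M"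
    using xs by blast
  then show "\<bar>g (xs i)\<bar> \<le> 1"
    using H_range[OF \<open>g' \<in> H\<close> hk_Zk] f_range by fastforce
qed (rule \<open>n \<ge> 1\<close>)

lemma target_error_le_empirical:
  assumes h: "h \<in> H" and lam: "joint_error \<le> lam" and n: "n \<ge> 1" and \<delta>: "0 < \<delta>" "\<delta> < 1"
    and xs: "xs \<in> space (PiM {..<n} (\<lambda>_. source))"
    and sample: "(\<integral>x. loss h x \<partial>source)
      \<le> (\<Sum>i<n. loss h (xs i)) / real n + sqrt (ln (1 / \<delta>) / (2 * real n))"
  shows "ennreal (feat_err (induced_dist target hk Zk) h fk)
    \<le> ennreal ((\<Sum>i<n. loss h (xs i)) / real n + lam
        + 2 * emp_rademacher ((\<lambda>g x. \<bar>g (hk x) - f x\<bar>) ` H) xs n + 3 * sqrt (ln (2 / \<delta>) / (2 * real n)))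
      + ennreal (2 * L) * transport_cost"
proof -
  have "xs i \<in> space M" if "i < n" for i
    using xs that by (auto simp: space_PiM space_source)
  then have "emp_rademacher ((\<lambda>g x. \<bar>g (hk x) - f x\<bar>) ` H) xs n \<ge> 0"
    by (rule emp_rademacher_loss_nonneg[OF h n])
  moreover have "sqrt (ln (1 / \<delta>) / (2 * real n)) \<le> sqrt (ln (2 / \<delta>) / (2 * real n))"
    using \<delta> by (intro real_sqrt_le_mono divide_right_mono) (auto simp: divide_right_mono)
  moreover have "sqrt (ln (2 / \<delta>) / (2 * real n)) \<ge> 0"
    using \<delta> by simp
  ultimately have "(\<integral>x. loss h x \<partial>source) + joint_error
      \<le> (\<Sum>i<n. loss h (xs i)) / real n + lam
        + 2 * emp_rademacher ((\<lambda>g x. \<bar>g (hk x) - f x\<bar>) ` H) xs n + 3 * sqrt (ln (2 / \<delta>) / (2 * real n))"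
    using sample lam by linarith
  then show ?thesis
    by (intro order_trans[OF target_error_le[OF h]] add_right_mono ennreal_leI)
qed

end

theorem theorem4p1:
  fixes M :: "'x measure"                        \<comment> \<open>input space X\<close>
    and Zk :: "'z::euclidean_space set"          \<comment> \<open>feature space\<close>
    and hk :: "'x \<Rightarrow> 'z"                     \<comment> \<open>representation map\<close>
    and f :: "'x \<Rightarrow> real" and fk :: "'z \<Rightarrow> real"
    and E :: "'e measure"                        \<comment> \<open>environment space\<close>
    and D :: "'e \<Rightarrow> 'x measure"                \<comment> \<open>family D_e\<close>
    and Pe :: "'e \<Rightarrow> real"                     \<comment> \<open>environment density Pi_e\<close>
    and m :: nat and w :: "nat \<Rightarrow> real" and es :: "nat \<Rightarrow> 'e"  \<comment> \<open>source: sum_{i<m} w_i D_{e_i}\<close>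
    and H :: "('z \<Rightarrow> real) set" and L :: real and lam :: real
    and n :: nat and \<delta> :: real and h :: "'z \<Rightarrow> real"
  defines "T \<equiv> env_mixture E Pe D M"
    and "S \<equiv> finite_mixture m w es D M"
  assumes hk_meas: "hk \<in> measurable M borel"
    and hk_Zk: "\<And>x. x \<in> space M \<Longrightarrow> hk x \<in> Zk"
    and f_meas: "f \<in> borel_measurable M"
    and f_range: "\<And>x. x \<in> space M \<Longrightarrow> f x \<in> {0..1}"
    and fk_meas: "fk \<in> borel_measurable (restrict_space borel Zk)"
    and fk_range: "\<And>z. z \<in> Zk \<Longrightarrow> fk z \<in> {0..1}"
    and fk_condexp: "\<And>A. A \<in> sets (restrict_space borel Zk) \<Longrightarrow>
        (\<integral>x\<in>hk -` A \<inter> space M. f x \<partial>S) = (\<integral>x\<in>hk -` A \<inter> space M. fk (hk x) \<partial>S)"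
    and D_kernel: "D \<in> measurable E (prob_algebra M)"
    and Pe_meas: "Pe \<in> borel_measurable E"
    and Pe_nonneg: "\<And>e. e \<in> space E \<Longrightarrow> Pe e \<ge> 0"
    and Pe_density: "(\<integral>\<^sup>+ e. ennreal (Pe e) \<partial>E) = 1"
    and es_in: "\<And>i. i < m \<Longrightarrow> es i \<in> space E"
    and w_nonneg: "\<And>i. i < m \<Longrightarrow> w i \<ge> 0"
    and w_sum: "(\<Sum>i<m. w i) = 1"
    and H_range: "\<And>g z. g \<in> H \<Longrightarrow> z \<in> Zk \<Longrightarrow> g z \<in> {0..1}"
    and H_lipschitz: "\<And>g. g \<in> H \<Longrightarrow> L-lipschitz_on Zk g"
    and lam_pos: "lam > 0"
    and lam_close: "(INF g\<in>H. feat_err (induced_dist S hk Zk) g fk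
                              + feat_err (induced_dist T hk Zk) g fk) \<le> lam"
    and n_pos: "n \<ge> 1"
    and delta: "0 < \<delta>" "\<delta> < 1"
    and h_in: "h \<in> H"
  shows "\<exists>A \<in> sets (PiM {..<n} (\<lambda>_. S)).
           measure (PiM {..<n} (\<lambda>_. S)) A \<ge> 1 - \<delta> \<and>
           (\<forall>xs\<in>A.
              ennreal (feat_err (induced_dist T hk Zk) h fk)
              \<le> ennreal ((\<Sum>i<n. \<bar>h (hk (xs i)) - f (xs i)\<bar>) / real n
                         + lam
                         + 2 * emp_rademacher ((\<lambda>g x. \<bar>g (hk x) - f x\<bar>) ` H) xs n
                         + 3 * sqrt (ln (2 / \<delta>) / (2 * real n)))
                + ennreal (2 * L) *
                  (\<Sum>i<m. ennreal (w i) *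
                     (\<integral>\<^sup>+ e. ennreal (Pe e) *
                        wasserstein1 (induced_dist (D (es i)) hk Zk) (induced_dist (D e) hk Zk) \<partial>E)))"
proof -
  interpret mixture_adaptation M Zk hk f fk E D Pe m w es H L
    using hk_meas hk_Zk f_meas f_range fk_meas fk_range fk_condexp D_kernel Pe_meas Pe_density
      es_in w_nonneg w_sum H_range H_lipschitz
    unfolding S_def by unfold_locales
  obtain A where A: "A \<in> sets (PiM {..<n} (\<lambda>_. source))" "measure (PiM {..<n} (\<lambda>_. source)) A \<ge> 1 - \<delta>"
    and sample: "\<And>xs. xs \<in> A \<Longrightarrow> (\<integral>x. loss h x \<partial>source)
      \<le> (\<Sum>i<n. loss h (xs i)) / real n + sqrt (ln (1 / \<delta>) / (2 * real n))"
    using Hoeffding_sample_mean[OF prob_space_source loss_measurable[OF h_in] loss_unit[OF h_in]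
        n_pos delta]
    by blast
  show ?thesis
    unfolding S_def T_def using A sample sets.sets_into_space[OF A(1)] lam_close[unfolded S_def T_def]
    by (intro bexI[OF _ A(1)] conjI ballI target_error_le_empirical[OF h_in _ n_pos delta]) auto
qed

end
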